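(* Let $\Phi=(V,C)$ be a $k$-uniform CNF formula with $n=|V|$ variables in which each variable belongs to at most $d$ clauses, and let $Z$ be its number of satisfying assignments. For $\theta\ge0$ let $Z(\theta)=\sum_{X\in\{0,1\}^V}\exp(-\theta|F(X)|)$, where $F(X)\subseteq C$ is the set of clauses not satisfied by $X$. Given $\varepsilon>0$, let $\ell=nd\left\lceil\ln\frac{4nd}{\varepsilon}\right\rceil$ and $\theta_\ell=\frac{\ell}{dn}$. If $2^k\ge 2\mathrm{e}dk$, then $$Z\le Z(\theta_\ell)\le\exp\left(\frac\varepsilon2\right)Z.$$
   Context: A CNF formula is $k$-uniform if every clause contains exactly $k$ literals on distinct variables (never both $x$ and $\neg x$). *)

theory Defs
  imports Complex_Main "HOL-Library.FuncSet"
begin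

text \<open>A CNF formula: variable set V, clause index set C (allowing repeated clauses),
 and for each clause index c its set of literals lits c, a literal being (variable, sign);
 literal (v,True) is x_v, (v,False) is the negation of x_v.\<close>

definition clause_vars :: "('v \<times> bool) set \<Rightarrow> 'v set" where
  "clause_vars L = fst ` L"

definition k_uniform_cnf :: "nat \<Rightarrow> 'v set \<Rightarrow> 'c set \<Rightarrow> ('c \<Rightarrow> ('v \<times> bool) set) \<Rightarrow> bool" where
  "k_uniform_cnf k V C lits \<longleftrightarrow> finite V \<and> finite C \<and>
     (\<forall>c\<in>C. clause_vars (lits c) \<subseteq> V \<and> finite (lits c) \<and> card (lits c) = k
              \<and> card (clause_vars (lits c)) = k)"

definition max_var_degree :: "'v set \<Rightarrow> 'c set \<Rightarrow> ('c \<Rightarrow> ('v \<times> bool) set) \<Rightarrow> nat \<Rightarrow> bool" where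
  "max_var_degree V C lits d \<longleftrightarrow> (\<forall>v\<in>V. card {c\<in>C. v \<in> clause_vars (lits c)} \<le> d)"

definition assignments :: "'v set \<Rightarrow> ('v \<Rightarrow> bool) set" where
  "assignments V = PiE V (\<lambda>_. UNIV)"

definition clause_sat :: "('v \<Rightarrow> bool) \<Rightarrow> ('v \<times> bool) set \<Rightarrow> bool" where
  "clause_sat X L \<longleftrightarrow> (\<exists>(v,b)\<in>L. X v = b)"

definition unsat_clauses :: "'c set \<Rightarrow> ('c \<Rightarrow> ('v \<times> bool) set) \<Rightarrow> ('v \<Rightarrow> bool) \<Rightarrow> 'c set" where
  "unsat_clauses C lits X = {c\<in>C. \<not> clause_sat X (lits c)}"

definition num_sat :: "'v set \<Rightarrow> 'c set \<Rightarrow> ('c \<Rightarrow> ('v \<times> bool) set) \<Rightarrow> nat" where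
  "num_sat V C lits = card {X\<in>assignments V. unsat_clauses C lits X = {}}"

definition Z_theta :: "'v set \<Rightarrow> 'c set \<Rightarrow> ('c \<Rightarrow> ('v \<times> bool) set) \<Rightarrow> real \<Rightarrow> real" where
  "Z_theta V C lits \<theta> = (\<Sum>X\<in>assignments V. exp (- \<theta> * real (card (unsat_clauses C lits X))))"

end

theory Submission
  imports Defs
begin

text \<open>Write \<open>q = exp (-\<theta>)\<close>. Grouping the assignments by their set \<open>S\<close> of violated clauses gives
  \<open>Z(\<theta>) = (\<Sum>S\<subseteq>C. q^|S| \<cdot> #{X. F(X) = S})\<close>, and every \<open>X\<close> with \<open>F(X) = S\<close> satisfies \<open>C - S\<close>.
  A local-lemma style induction shows that imposing one more clause on a set of clauses keeps
  at least a fraction \<open>1 - 1/(2kd)\<close> of its satisfying assignments: a clause \<open>c\<close> is violated by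
  exactly a \<open>2^-k\<close> fraction of the assignments satisfying the clauses that share no variable
  with \<open>c\<close>, and the at most \<open>kd\<close> clauses that do share one lose at most half of those
  assignments. Hence \<open>#{X. F(X) = S} \<le> 2^|S| Z\<close>, so \<open>Z(\<theta>) \<le> (1 + 2q)^|C| Z \<le> exp (2q|C|) Z\<close>;
  since \<open>|C| \<le> nd\<close>, the choice of \<open>\<theta>\<close> makes \<open>2q|C| \<le> \<epsilon>/2\<close>.\<close>

definition satisfies :: "('c \<Rightarrow> ('v \<times> bool) set) \<Rightarrow> 'c set \<Rightarrow> ('v \<Rightarrow> bool) \<Rightarrow> bool" where
  "satisfies lits T X \<longleftrightarrow> (\<forall>c\<in>T. clause_sat X (lits c))"

definition assignment_count :: "'v set \<Rightarrow> (('v \<Rightarrow> bool) \<Rightarrow> bool) \<Rightarrow> real" where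
  "assignment_count V P = real (card {X \<in> assignments V. P X})"

lemma finite_assignments: "finite V \<Longrightarrow> finite (assignments V)"
  by (simp add: assignments_def finite_PiE)

lemma assignment_count_nonneg: "0 \<le> assignment_count V P"
  by (simp add: assignment_count_def)

lemma assignment_count_split:
  assumes "finite V"
  shows "assignment_count V P
       = assignment_count V (\<lambda>X. R X \<and> P X) + assignment_count V (\<lambda>X. \<not> R X \<and> P X)"
proof -
  have "{X \<in> assignments V. P X}
      = {X \<in> assignments V. R X \<and> P X} \<union> {X \<in> assignments V. \<not> R X \<and> P X}"
    by auto
  then have "card {X \<in> assignments V. P X}
      = card {X \<in> assignments V. R X \<and> P X} + card {X \<in> assignments V. \<not> R X \<and> P X}"
    by (simp only:) (rule card_Un_disjoint, auto simp: finite_assignments assms)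
  then show ?thesis by (simp add: assignment_count_def)
qed

lemma assignment_count_mono:
  assumes "finite V" "\<And>X. X \<in> assignments V \<Longrightarrow> P X \<Longrightarrow> R X"
  shows "assignment_count V P \<le> assignment_count V R"
  unfolding assignment_count_def
  by (intro of_nat_mono card_mono) (use assms in \<open>auto simp: finite_assignments\<close>)

lemma clause_sat_cong:
  assumes "\<And>v. v \<in> clause_vars L \<Longrightarrow> X v = Y v"
  shows "clause_sat X L = clause_sat Y L"
  unfolding clause_sat_def
proof (rule bex_cong[OF refl], clarify)
  fix v b assume "(v, b) \<in> L"
  then have "v \<in> clause_vars L" by (force simp: clause_vars_def)
  then show "(X v = b) = (Y v = b)" using assms by simp
qed

lemma satisfies_cong:
  assumes "\<And>c v. c \<in> T \<Longrightarrow> v \<in> clause_vars (lits c) \<Longrightarrow> X v = Y v"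
  shows "satisfies lits T X = satisfies lits T Y"
proof -
  have "clause_sat X (lits c) = clause_sat Y (lits c)" if "c \<in> T" for c
    using assms that by (intro clause_sat_cong)
  then show ?thesis unfolding satisfies_def by blast
qed

section \<open>Independence of clauses on disjoint variables\<close>

lemma card_restrict_fiber_eq:
  assumes "W \<subseteq> V" "p \<in> assignments W" "p' \<in> assignments W"
    and indep: "\<And>X Y. X \<in> assignments V \<Longrightarrow> Y \<in> assignments V \<Longrightarrow>
      (\<forall>v\<in>V - W. X v = Y v) \<Longrightarrow> Q X = Q Y"
  shows "card {X \<in> assignments V. Q X \<and> restrict X W = p}
       = card {X \<in> assignments V. Q X \<and> restrict X W = p'}"
proof -
  define switch where "switch q X = (\<lambda>v. if v \<in> W then q v else X v)" for q X :: "'a \<Rightarrow> bool"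
  have switch_in: "switch q X \<in> {X \<in> assignments V. Q X \<and> restrict X W = q}"
    if "q \<in> assignments W" "X \<in> assignments V" "Q X" for q X
  proof -
    have "switch q X \<in> assignments V"
      using that assms(1) by (auto simp: switch_def assignments_def PiE_iff extensional_def)
    moreover have "Q (switch q X) = Q X"
      using calculation that(2) by (intro indep) (auto simp: switch_def)
    moreover have "restrict (switch q X) W = q"
      using that(1) by (auto simp: switch_def assignments_def PiE_iff extensional_def restrict_def fun_eq_iff)
    ultimately show ?thesis using that(3) by simp
  qed
  have switch_back: "switch q (switch q' X) = X" if "restrict X W = q" for q q' X
    using that by (force simp: switch_def fun_eq_iff restrict_def)
  have "bij_betw (switch p') {X \<in> assignments V. Q X \<and> restrict X W = p}
      {X \<in> assignments V. Q X \<and> restrict X W = p'}"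
    by (rule bij_betw_byWitness[where f' = "switch p"]) (use switch_in switch_back assms(2,3) in auto)
  then show ?thesis by (rule bij_betw_same_card)
qed

lemma card_restrict_fiber:
  assumes "finite V" "W \<subseteq> V" "p \<in> assignments W"
    and indep: "\<And>X Y. X \<in> assignments V \<Longrightarrow> Y \<in> assignments V \<Longrightarrow>
      (\<forall>v\<in>V - W. X v = Y v) \<Longrightarrow> Q X = Q Y"
  shows "card {X \<in> assignments V. Q X \<and> restrict X W = p} * 2 ^ card W
       = card {X \<in> assignments V. Q X}"
proof -
  define fiber where "fiber q = {X \<in> assignments V. Q X \<and> restrict X W = q}" for q
  have "finite W" using assms(1,2) finite_subset by blast
  have "{X \<in> assignments V. Q X} = (\<Union>q\<in>assignments W. fiber q)"
    by (auto simp: fiber_def assignments_def)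
  moreover have "card (\<Union>q\<in>assignments W. fiber q) = (\<Sum>q\<in>assignments W. card (fiber q))"
    by (rule card_UN_disjoint) (auto simp: fiber_def finite_assignments assms(1) \<open>finite W\<close>)
  ultimately have "card {X \<in> assignments V. Q X} = (\<Sum>q\<in>assignments W. card (fiber q))"
    by simp
  also have "\<dots> = (\<Sum>q\<in>assignments W. card (fiber p))"
  proof (rule sum.cong[OF refl])
    fix q assume "q \<in> assignments W"
    show "card (fiber q) = card (fiber p)"
      unfolding fiber_def by (rule card_restrict_fiber_eq[OF assms(2) \<open>q \<in> assignments W\<close> assms(3) indep])
  qed
  also have "\<dots> = card (fiber p) * 2 ^ card W"
    using \<open>finite W\<close> by (simp add: assignments_def card_PiE)
  finally show ?thesis by (simp add: fiber_def)
qed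

lemma assignment_count_violating_independent:
  assumes "finite V" "clause_vars L \<subseteq> V"
    and indep: "\<And>X Y. X \<in> assignments V \<Longrightarrow> Y \<in> assignments V \<Longrightarrow>
      (\<forall>v\<in>V - clause_vars L. X v = Y v) \<Longrightarrow> Q X = Q Y"
  shows "assignment_count V (\<lambda>X. \<not> clause_sat X L \<and> Q X) * 2 ^ card (clause_vars L)
       \<le> assignment_count V Q"
proof -
  \<comment> \<open>the unique assignment of the variables of \<open>L\<close> that violates \<open>L\<close>\<close>
  define p where "p = restrict (\<lambda>v. (v, True) \<notin> L) (clause_vars L)"
  have "restrict X (clause_vars L) = p" if "\<not> clause_sat X L" for X
  proof -
    have "X v = ((v, True) \<notin> L)" if "v \<in> clause_vars L" for v
    proof -
      obtain b where "(v, b) \<in> L" using \<open>v \<in> clause_vars L\<close> by (auto simp: clause_vars_def)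
      then show ?thesis using \<open>\<not> clause_sat X L\<close> unfolding clause_sat_def by (cases b) auto
    qed
    then show ?thesis unfolding p_def by (rule restrict_ext)
  qed
  then have "{X \<in> assignments V. \<not> clause_sat X L \<and> Q X}
      \<subseteq> {X \<in> assignments V. Q X \<and> restrict X (clause_vars L) = p}"
    by blast
  then have "card {X \<in> assignments V. \<not> clause_sat X L \<and> Q X}
      \<le> card {X \<in> assignments V. Q X \<and> restrict X (clause_vars L) = p}"
    by (rule card_mono[rotated]) (simp add: finite_assignments assms(1))
  then have "card {X \<in> assignments V. \<not> clause_sat X L \<and> Q X} * 2 ^ card (clause_vars L)
      \<le> card {X \<in> assignments V. Q X \<and> restrict X (clause_vars L) = p} * 2 ^ card (clause_vars L)"
    by (rule mult_le_mono1)
  also have "\<dots> = card {X \<in> assignments V. Q X}"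
    by (rule card_restrict_fiber[OF assms(1,2) _ indep]) (simp add: p_def assignments_def)
  finally have "real (card {X \<in> assignments V. \<not> clause_sat X L \<and> Q X} * 2 ^ card (clause_vars L))
      \<le> real (card {X \<in> assignments V. Q X})"
    by (rule of_nat_mono)
  then show ?thesis by (simp add: assignment_count_def)
qed

section \<open>A local lemma for uniform formulas of bounded degree\<close>

lemma card_clauses_meeting_le:
  assumes "max_var_degree V C lits d" "finite C" "finite W" "W \<subseteq> V"
  shows "card {c \<in> C. clause_vars (lits c) \<inter> W \<noteq> {}} \<le> card W * d"
proof -
  have "{c \<in> C. clause_vars (lits c) \<inter> W \<noteq> {}} = (\<Union>v\<in>W. {c \<in> C. v \<in> clause_vars (lits c)})"
    by auto
  then have "card {c \<in> C. clause_vars (lits c) \<inter> W \<noteq> {}}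
      \<le> (\<Sum>v\<in>W. card {c \<in> C. v \<in> clause_vars (lits c)})"
    by (simp only:) (rule card_UN_le[OF assms(3)])
  also have "\<dots> \<le> (\<Sum>v\<in>W. d)"
    using assms(1,4) unfolding max_var_degree_def by (intro sum_mono) auto
  finally show ?thesis by simp
qed

lemma card_clauses_meeting_clause_le:
  assumes cnf: "k_uniform_cnf k V C lits" and deg: "max_var_degree V C lits d"
    and "c \<in> C" "T \<subseteq> C"
  shows "card {t \<in> T. clause_vars (lits t) \<inter> clause_vars (lits c) \<noteq> {}} \<le> k * d"
proof -
  have "finite V" "finite C" using cnf by (auto simp: k_uniform_cnf_def)
  have vars_c: "clause_vars (lits c) \<subseteq> V" "card (clause_vars (lits c)) = k"
    using cnf \<open>c \<in> C\<close> by (auto simp: k_uniform_cnf_def)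
  have "card {t \<in> T. clause_vars (lits t) \<inter> clause_vars (lits c) \<noteq> {}}
      \<le> card {t \<in> C. clause_vars (lits t) \<inter> clause_vars (lits c) \<noteq> {}}"
    using \<open>T \<subseteq> C\<close> \<open>finite C\<close> by (intro card_mono) auto
  also have "\<dots> \<le> k * d"
    using card_clauses_meeting_le[OF deg \<open>finite C\<close> finite_subset[OF vars_c(1) \<open>finite V\<close>] vars_c(1)]
    by (simp only: vars_c(2))
  finally show ?thesis .
qed

lemma card_clauses_le:
  assumes cnf: "k_uniform_cnf k V C lits" and "k \<ge> 1" and deg: "max_var_degree V C lits d"
  shows "card C \<le> card V * d"
proof -
  have "finite C" "finite V" using cnf by (auto simp: k_uniform_cnf_def)
  have "clause_vars (lits c) \<inter> V \<noteq> {}" if "c \<in> C" for c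
  proof -
    have "clause_vars (lits c) \<subseteq> V" "card (clause_vars (lits c)) = k"
      using cnf that by (auto simp: k_uniform_cnf_def)
    with \<open>k \<ge> 1\<close> have "clause_vars (lits c) \<noteq> {}" by auto
    with \<open>clause_vars (lits c) \<subseteq> V\<close> show ?thesis by blast
  qed
  then have "{c \<in> C. clause_vars (lits c) \<inter> V \<noteq> {}} = C" by blast
  with card_clauses_meeting_le[OF deg \<open>finite C\<close> \<open>finite V\<close> order_refl] show ?thesis by simp
qed

lemma one_le_k_mult_degree:
  assumes cnf: "k_uniform_cnf k V C lits" and "k \<ge> 1" and deg: "max_var_degree V C lits d"
    and "C \<noteq> {}"
  shows "1 \<le> real k * real d"
proof -
  have "0 < card C" using cnf \<open>C \<noteq> {}\<close> by (simp add: k_uniform_cnf_def card_gt_0_iff)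
  with card_clauses_le[OF cnf \<open>k \<ge> 1\<close> deg] have "d \<noteq> 0" by (metis mult_0_right not_le)
  then have "1 \<le> k * d" using \<open>k \<ge> 1\<close> by simp
  then show ?thesis by (metis of_nat_1 of_nat_le_iff of_nat_mult)
qed

lemma assignment_count_satisfies_union_ge:
  fixes x :: real
  assumes "finite V" "finite U" "T \<inter> U = {}" "x \<le> 1"
    and violating_le: "\<And>W c. W \<subseteq> T \<union> U \<Longrightarrow> c \<in> U \<Longrightarrow> c \<notin> W \<Longrightarrow>
      assignment_count V (\<lambda>X. \<not> clause_sat X (lits c) \<and> satisfies lits W X)
        \<le> x * assignment_count V (satisfies lits W)"
  shows "(1 - x) ^ card U * assignment_count V (satisfies lits T)
       \<le> assignment_count V (satisfies lits (T \<union> U))"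
  using assms(2,3,5)
proof (induction U rule: finite_induct)
  case empty
  then show ?case by simp
next
  case (insert u U)
  let ?N = "assignment_count V"
  have IH: "(1 - x) ^ card U * ?N (satisfies lits T) \<le> ?N (satisfies lits (T \<union> U))"
    using insert.prems by (intro insert.IH) auto
  have split: "?N (satisfies lits (T \<union> U)) = ?N (satisfies lits (T \<union> insert u U))
      + ?N (\<lambda>X. \<not> clause_sat X (lits u) \<and> satisfies lits (T \<union> U) X)"
  proof -
    have "satisfies lits (T \<union> insert u U) = (\<lambda>X. clause_sat X (lits u) \<and> satisfies lits (T \<union> U) X)"
      by (auto simp: satisfies_def)
    then show ?thesis
      by (simp add: assignment_count_split[OF assms(1),
            where P = "satisfies lits (T \<union> U)" and R = "\<lambda>X. clause_sat X (lits u)"])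
  qed
  have violating: "?N (\<lambda>X. \<not> clause_sat X (lits u) \<and> satisfies lits (T \<union> U) X)
      \<le> x * ?N (satisfies lits (T \<union> U))"
    using insert.prems insert.hyps by (intro insert.prems(2)) auto
  have "(1 - x) ^ card (insert u U) * ?N (satisfies lits T)
      = (1 - x) * ((1 - x) ^ card U * ?N (satisfies lits T))"
    using insert.hyps by simp
  also have "\<dots> \<le> (1 - x) * ?N (satisfies lits (T \<union> U))"
    using IH assms(4) by (intro mult_left_mono) auto
  also have "\<dots> \<le> ?N (satisfies lits (T \<union> insert u U))"
    using split violating by (simp add: algebra_simps)
  finally show ?case .
qed

lemma assignment_count_satisfies_union_ge_half:
  fixes x :: real
  assumes "finite V" "finite U" "T \<inter> U = {}" "x \<le> 1" "real (card U) * x \<le> 1 / 2"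
    and violating_le: "\<And>W c. W \<subseteq> T \<union> U \<Longrightarrow> c \<in> U \<Longrightarrow> c \<notin> W \<Longrightarrow>
      assignment_count V (\<lambda>X. \<not> clause_sat X (lits c) \<and> satisfies lits W X)
        \<le> x * assignment_count V (satisfies lits W)"
  shows "assignment_count V (satisfies lits T) \<le> 2 * assignment_count V (satisfies lits (T \<union> U))"
proof -
  have "1 / 2 \<le> 1 + real (card U) * (- x)"
    using assms(5) by simp
  also have "\<dots> \<le> (1 - x) ^ card U"
    using Bernoulli_inequality[of "- x" "card U"] assms(4) by simp
  finally have "1 / 2 * assignment_count V (satisfies lits T)
      \<le> (1 - x) ^ card U * assignment_count V (satisfies lits T)"
    by (rule mult_right_mono) (rule assignment_count_nonneg)
  also have "\<dots> \<le> assignment_count V (satisfies lits (T \<union> U))"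
    by (rule assignment_count_satisfies_union_ge[OF assms(1-4) violating_le])
  finally show ?thesis by simp
qed

lemma assignment_count_violating_far_le:
  assumes cnf: "k_uniform_cnf k V C lits" and "c \<in> C" "T \<subseteq> C"
  shows "assignment_count V (\<lambda>X. \<not> clause_sat X (lits c) \<and> satisfies lits T X) * 2 ^ k
       \<le> assignment_count V (satisfies lits {t \<in> T. clause_vars (lits t) \<inter> clause_vars (lits c) = {}})"
    (is "_ \<le> assignment_count V (satisfies lits ?far)")
proof -
  have "finite V" and vars_c: "clause_vars (lits c) \<subseteq> V" "card (clause_vars (lits c)) = k"
    using cnf \<open>c \<in> C\<close> by (auto simp: k_uniform_cnf_def)
  have "assignment_count V (\<lambda>X. \<not> clause_sat X (lits c) \<and> satisfies lits T X)
      \<le> assignment_count V (\<lambda>X. \<not> clause_sat X (lits c) \<and> satisfies lits ?far X)"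
    using \<open>finite V\<close> by (rule assignment_count_mono) (auto simp: satisfies_def)
  moreover have "assignment_count V (\<lambda>X. \<not> clause_sat X (lits c) \<and> satisfies lits ?far X) * 2 ^ k
      \<le> assignment_count V (satisfies lits ?far)"
  proof (rule assignment_count_violating_independent[OF \<open>finite V\<close> vars_c(1), unfolded vars_c(2)])
    fix X Y :: "_ \<Rightarrow> bool" assume agree: "\<forall>v\<in>V - clause_vars (lits c). X v = Y v"
    have "clause_vars (lits t) \<subseteq> V" if "t \<in> T" for t
      using cnf that \<open>T \<subseteq> C\<close> by (auto simp: k_uniform_cnf_def)
    then show "satisfies lits ?far X = satisfies lits ?far Y"
      using agree by (intro satisfies_cong) blast
  qed
  ultimately show ?thesis by (meson mult_right_mono order_trans zero_le_numeral zero_le_power)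
qed

lemma assignment_count_violating_le:
  assumes cnf: "k_uniform_cnf k V C lits" and "k \<ge> 1" and deg: "max_var_degree V C lits d"
    and k_large: "4 * real k * real d \<le> 2 ^ k"
    and "T \<subseteq> C" "c \<in> C" "c \<notin> T"
  shows "assignment_count V (\<lambda>X. \<not> clause_sat X (lits c) \<and> satisfies lits T X)
       \<le> assignment_count V (satisfies lits T) / (2 * real k * real d)"
proof -
  have "finite V" "finite C" using cnf by (auto simp: k_uniform_cnf_def)
  have kd: "1 \<le> real k * real d"
    using one_le_k_mult_degree[OF cnf \<open>k \<ge> 1\<close> deg] \<open>c \<in> C\<close> by blast
  have "finite T" using \<open>T \<subseteq> C\<close> \<open>finite C\<close> finite_subset by blast
  then show ?thesis using \<open>T \<subseteq> C\<close> \<open>c \<in> C\<close> \<open>c \<notin> T\<close>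
  proof (induction T arbitrary: c rule: finite_psubset_induct)
    case (psubset T)
    let ?N = "assignment_count V"
    define near where "near = {t \<in> T. clause_vars (lits t) \<inter> clause_vars (lits c) \<noteq> {}}"
    have "T - near = {t \<in> T. clause_vars (lits t) \<inter> clause_vars (lits c) = {}}"
      by (auto simp: near_def)
    then have far: "?N (\<lambda>X. \<not> clause_sat X (lits c) \<and> satisfies lits T X) * 2 ^ k
        \<le> ?N (satisfies lits (T - near))"
      using assignment_count_violating_far_le[OF cnf psubset.prems(2,1)] by simp
    have "real (card near) \<le> real k * real d"
      using card_clauses_meeting_clause_le[OF cnf deg psubset.prems(2,1)] unfolding near_def
      by (metis of_nat_mono of_nat_mult)
    then have near_small: "real (card near) * (1 / (2 * real k * real d)) \<le> 1 / 2"
      using kd by (simp add: field_simps)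
    have near_half: "?N (satisfies lits (T - near)) \<le> 2 * ?N (satisfies lits (T - near \<union> near))"
    proof (rule assignment_count_satisfies_union_ge_half[OF \<open>finite V\<close>])
      show "finite near" using psubset.hyps by (simp add: near_def)
      show "1 / (2 * real k * real d) \<le> 1" using kd by (simp add: field_simps)
      fix W c' assume "W \<subseteq> T - near \<union> near" "c' \<in> near" "c' \<notin> W"
      then have "W \<subset> T" "W \<subseteq> C" "c' \<in> C" using psubset.prems(1) by (auto simp: near_def)
      then show "?N (\<lambda>X. \<not> clause_sat X (lits c') \<and> satisfies lits W X)
          \<le> 1 / (2 * real k * real d) * ?N (satisfies lits W)"
        using psubset.IH \<open>c' \<notin> W\<close> by simp
    qed (use near_small in auto)
    have "T - near \<union> near = T" by (auto simp: near_def)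
    with near_half have "?N (satisfies lits (T - near)) \<le> 2 * ?N (satisfies lits T)" by simp
    moreover have "?N (\<lambda>X. \<not> clause_sat X (lits c) \<and> satisfies lits T X) * (4 * real k * real d)
        \<le> ?N (\<lambda>X. \<not> clause_sat X (lits c) \<and> satisfies lits T X) * 2 ^ k"
      using k_large by (rule mult_left_mono) (rule assignment_count_nonneg)
    ultimately have "?N (\<lambda>X. \<not> clause_sat X (lits c) \<and> satisfies lits T X) * (2 * real k * real d)
        \<le> ?N (satisfies lits T)"
      using far by (simp add: algebra_simps)
    moreover have "0 < 2 * real k * real d" using kd by (simp only: mult.assoc)
    ultimately show ?case by (simp add: pos_le_divide_eq)
  qed
qed

section \<open>The partition function\<close>

lemma assignment_count_unsat_clauses_eq_le:
  assumes cnf: "k_uniform_cnf k V C lits" and "k \<ge> 1" and deg: "max_var_degree V C lits d"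
    and k_large: "4 * real k * real d \<le> 2 ^ k" and "S \<subseteq> C"
  shows "assignment_count V (\<lambda>X. unsat_clauses C lits X = S)
       \<le> 2 ^ card S * assignment_count V (satisfies lits C)"
proof (cases "C = {}")
  case True
  with \<open>S \<subseteq> C\<close> have "S = {}" by blast
  have "finite V" using cnf by (simp add: k_uniform_cnf_def)
  then show ?thesis
    by (simp add: True \<open>S = {}\<close> assignment_count_mono unsat_clauses_def satisfies_def)
next
  case False
  let ?N = "assignment_count V"
  define x where "x = 1 / (2 * real k * real d)"
  have "finite V" "finite C" using cnf by (auto simp: k_uniform_cnf_def)
  have "x \<le> 1 / 2"
    using one_le_k_mult_degree[OF cnf \<open>k \<ge> 1\<close> deg False] by (simp add: x_def field_simps)
  have "(1 / 2) ^ card S * ?N (\<lambda>X. unsat_clauses C lits X = S)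
      \<le> (1 - x) ^ card S * ?N (satisfies lits (C - S))"
    using \<open>x \<le> 1 / 2\<close> \<open>finite V\<close>
    by (intro mult_mono power_mono assignment_count_mono)
      (auto simp: unsat_clauses_def satisfies_def assignment_count_nonneg)
  also have "\<dots> \<le> ?N (satisfies lits (C - S \<union> S))"
  proof (rule assignment_count_satisfies_union_ge[OF \<open>finite V\<close>])
    show "finite S" using \<open>S \<subseteq> C\<close> \<open>finite C\<close> finite_subset by blast
    show "x \<le> 1" using \<open>x \<le> 1 / 2\<close> by simp
    fix W c assume "W \<subseteq> C - S \<union> S" "c \<in> S" "c \<notin> W"
    then have "W \<subseteq> C" "c \<in> C" using \<open>S \<subseteq> C\<close> by auto
    then show "?N (\<lambda>X. \<not> clause_sat X (lits c) \<and> satisfies lits W X) \<le> x * ?N (satisfies lits W)"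
      using assignment_count_violating_le[OF cnf \<open>k \<ge> 1\<close> deg k_large _ _ \<open>c \<notin> W\<close>]
      by (simp add: x_def)
  qed auto
  also have "C - S \<union> S = C" using \<open>S \<subseteq> C\<close> by blast
  finally show ?thesis by (simp add: field_simps power_divide)
qed

lemma sum_Pow_power_card:
  fixes r :: "'a :: comm_semiring_1"
  assumes "finite A"
  shows "(\<Sum>S\<in>Pow A. r ^ card S) = (1 + r) ^ card A"
  using prod_add[OF assms, of "\<lambda>_. r" "\<lambda>_. 1"] by (simp add: add.commute)

lemma num_sat_eq_assignment_count: "real (num_sat V C lits) = assignment_count V (satisfies lits C)"
  unfolding num_sat_def assignment_count_def unsat_clauses_def satisfies_def by (simp add: Ball_def)

lemma num_sat_le_Z_theta:
  assumes "finite V"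
  shows "real (num_sat V C lits) \<le> Z_theta V C lits \<theta>"
proof -
  have "real (num_sat V C lits)
      = (\<Sum>X\<in>{X \<in> assignments V. unsat_clauses C lits X = {}}. exp (- \<theta> * real (card (unsat_clauses C lits X))))"
    by (simp add: num_sat_def)
  also have "\<dots> \<le> Z_theta V C lits \<theta>"
    unfolding Z_theta_def by (rule sum_mono2) (auto simp: finite_assignments assms)
  finally show ?thesis .
qed

lemma Z_theta_eq_sum_Pow:
  assumes "finite V" "finite C"
  shows "Z_theta V C lits \<theta>
       = (\<Sum>S\<in>Pow C. exp (- \<theta>) ^ card S * assignment_count V (\<lambda>X. unsat_clauses C lits X = S))"
proof -
  have "Z_theta V C lits \<theta> = (\<Sum>X\<in>assignments V. exp (- \<theta>) ^ card (unsat_clauses C lits X))"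
    unfolding Z_theta_def by (simp add: mult.commute flip: exp_of_nat_mult)
  also have "\<dots> = (\<Sum>S\<in>Pow C. \<Sum>X\<in>{X \<in> assignments V. unsat_clauses C lits X = S}.
      exp (- \<theta>) ^ card (unsat_clauses C lits X))"
    by (rule sum.group[symmetric]) (auto simp: unsat_clauses_def finite_assignments assms)
  also have "\<dots> = (\<Sum>S\<in>Pow C. exp (- \<theta>) ^ card S * assignment_count V (\<lambda>X. unsat_clauses C lits X = S))"
    by (rule sum.cong) (auto simp: assignment_count_def)
  finally show ?thesis .
qed

lemma Z_theta_le:
  assumes cnf: "k_uniform_cnf k V C lits" and "k \<ge> 1" and deg: "max_var_degree V C lits d"
    and k_large: "4 * real k * real d \<le> 2 ^ k"
  shows "Z_theta V C lits \<theta> \<le> (1 + 2 * exp (- \<theta>)) ^ card C * real (num_sat V C lits)"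
proof -
  let ?q = "exp (- \<theta>)" and ?Z = "assignment_count V (satisfies lits C)"
  have "finite V" "finite C" using cnf by (auto simp: k_uniform_cnf_def)
  have "Z_theta V C lits \<theta>
      = (\<Sum>S\<in>Pow C. ?q ^ card S * assignment_count V (\<lambda>X. unsat_clauses C lits X = S))"
    by (rule Z_theta_eq_sum_Pow[OF \<open>finite V\<close> \<open>finite C\<close>])
  also have "\<dots> \<le> (\<Sum>S\<in>Pow C. ?q ^ card S * (2 ^ card S * ?Z))"
    using assignment_count_unsat_clauses_eq_le[OF cnf \<open>k \<ge> 1\<close> deg k_large]
    by (intro sum_mono mult_left_mono) auto
  also have "\<dots> = (\<Sum>S\<in>Pow C. (2 * ?q) ^ card S) * ?Z"
    by (simp add: sum_distrib_left sum_distrib_right power_mult_distrib algebra_simps)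
  also have "\<dots> = (1 + 2 * ?q) ^ card C * real (num_sat V C lits)"
    by (simp only: sum_Pow_power_card[OF \<open>finite C\<close>] num_sat_eq_assignment_count)
  finally show ?thesis .
qed

lemma one_plus_power_le_exp:
  fixes a :: real
  assumes "0 \<le> a"
  shows "(1 + a) ^ n \<le> exp (real n * a)"
proof -
  have "(1 + a) ^ n \<le> exp a ^ n"
    using assms by (intro power_mono) (auto simp: add.commute exp_ge_add_one_self)
  then show ?thesis by (simp add: exp_of_nat_mult)
qed

lemma one_plus_two_exp_neg_ceiling_power_le:
  fixes m \<epsilon> :: real
  assumes "real c \<le> m" "0 < \<epsilon>"
  shows "(1 + 2 * exp (- (m * of_int \<lceil>ln (4 * m / \<epsilon>)\<rceil> / m))) ^ c \<le> exp (\<epsilon> / 2)"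
proof (cases "c = 0")
  case True
  with assms(2) show ?thesis by simp
next
  case False
  with assms(1) have "0 < m" by (metis of_nat_0_less_iff gr0I order_less_le_trans)
  define q :: real where "q = exp (- of_int \<lceil>ln (4 * m / \<epsilon>)\<rceil>)"
  have "q \<le> exp (- ln (4 * m / \<epsilon>))"
    by (simp add: q_def)
  also have "\<dots> = \<epsilon> / (4 * m)"
    using \<open>0 < m\<close> assms(2) by (simp add: exp_minus)
  finally have "m * q \<le> \<epsilon> / 4"
    using \<open>0 < m\<close> by (simp add: field_simps)
  moreover have "real c * q \<le> m * q"
    using assms(1) by (rule mult_right_mono) (simp add: q_def)
  ultimately have "real c * q \<le> \<epsilon> / 4" by linarith
  have "(1 + 2 * q) ^ c \<le> exp (real c * (2 * q))"
    by (rule one_plus_power_le_exp) (simp add: q_def)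
  also have "\<dots> \<le> exp (\<epsilon> / 2)"
    using \<open>real c * q \<le> \<epsilon> / 4\<close> by simp
  finally show ?thesis
    using \<open>0 < m\<close> by (simp add: q_def)
qed

theorem lemma7p2:
  fixes V :: "'v set" and C :: "'c set" and lits :: "'c \<Rightarrow> ('v \<times> bool) set"
    and k d :: nat and \<epsilon> :: real
  assumes "k_uniform_cnf k V C lits"
    and "k \<ge> 1"
    and "max_var_degree V C lits d"
    and "\<epsilon> > 0"
    and "2 ^ k \<ge> 2 * exp 1 * real d * real k"
  defines "n \<equiv> card V"
  defines "ell \<equiv> real n * real d * of_int \<lceil>ln (4 * real n * real d / \<epsilon>)\<rceil>"
  defines "\<theta> \<equiv> ell / (real d * real n)"
  shows "real (num_sat V C lits) \<le> Z_theta V C lits \<theta>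
       \<and> Z_theta V C lits \<theta> \<le> exp (\<epsilon> / 2) * real (num_sat V C lits)"
proof
  note cnf = assms(1) and deg = assms(3)
  show "real (num_sat V C lits) \<le> Z_theta V C lits \<theta>"
    using cnf by (intro num_sat_le_Z_theta) (simp add: k_uniform_cnf_def)
  have "4 * real k * real d = 2 * (2 * real d * real k)" by simp
  also have "\<dots> \<le> exp 1 * (2 * real d * real k)"
    using exp_ge_add_one_self[of 1] by (intro mult_right_mono) simp_all
  also have "\<dots> \<le> 2 ^ k" using assms(5) by simp
  finally have "Z_theta V C lits \<theta> \<le> (1 + 2 * exp (- \<theta>)) ^ card C * real (num_sat V C lits)"
    by (rule Z_theta_le[OF cnf assms(2) deg])
  also have "(1 + 2 * exp (- \<theta>)) ^ card C \<le> exp (\<epsilon> / 2)"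
  proof -
    have card_C: "real (card C) \<le> real n * real d"
      using card_clauses_le[OF cnf assms(2) deg] unfolding n_def by (metis of_nat_mono of_nat_mult)
    have "\<theta> = real n * real d * of_int \<lceil>ln (4 * (real n * real d) / \<epsilon>)\<rceil> / (real n * real d)"
      unfolding \<theta>_def ell_def by (simp only: ac_simps)
    then show ?thesis
      using one_plus_two_exp_neg_ceiling_power_le[OF card_C assms(4)] by (simp only:)
  qed
  finally show "Z_theta V C lits \<theta> \<le> exp (\<epsilon> / 2) * real (num_sat V C lits)"
    by (simp add: mult_right_mono)
qed

end
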